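(* Let $\mathcal{A}\subseteq\mathcal{B}(\mathcal{H})$ be a von Neumann algebra and $T:\mathcal{A}\to\mathcal{A}$ a Markov operator. (a) An element $y\in\mathcal{A}_+$ is a potential for $T$ if and only if $T(y)\leq y$ and $T^n(y)\to 0$ in the strong operator topology as $n\to\infty$. (b) An element $a\in\mathcal{A}_+$ satisfies $T(a)\leq a$ if and only if there are a potential $y$ for $T$ and an element $h\in\mathcal{A}$ with $h\geq 0$ and $T(h)=h$ such that $a=y+h$. Such a decomposition is unique.
   Context: A von Neumann algebra $\mathcal{A}\subseteq\mathcal{B}(\mathcal{H})$ is a strongly closed *-algebra containing the identity $\mathbbm{1}$; $\mathcal{A}_+$ is its cone of positive elements. A Markov operator is a normal (i.e. preserving suprema of bounded increasing nets in $\mathcal{A}_+$), completely positive, unital linear map $T:\mathcal{A}\to\mathcal{A}$. An element $x\in\mathcal{A}_+$ is $T$-summable if $\sum_{n=0}^\infty T^n(x)$ converges (in the strong operator topology) to an element of $\mathcal{A}_+$. An element $y\in\mathcal{A}_+$ is a potential for $T$ if $y=\sum_{n=0}^\infty T^n(x)$ for some $T$-summable $x\in\mathcal{A}_+$. *)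

theory Defs
  imports "HOL-Analysis.Analysis"
begin

class chilbert = banach +
  fixes cscale :: "complex \<Rightarrow> 'a \<Rightarrow> 'a"
    and cinner :: "'a \<Rightarrow> 'a \<Rightarrow> complex"
  assumes cscale_add_right: "cscale c (x + y) = cscale c x + cscale c y"
    and cscale_add_left: "cscale (c + d) x = cscale c x + cscale d x"
    and cscale_cscale: "cscale c (cscale d x) = cscale (c * d) x"
    and cscale_one: "cscale 1 x = x"
    and cscale_of_real: "cscale (complex_of_real r) x = scaleR r x"
    and cinner_commute: "cinner x y = cnj (cinner y x)"
    and cinner_add_right: "cinner x (y + z) = cinner x y + cinner x z"
    and cinner_cscale_right: "cinner x (cscale c y) = c * cinner x y"
    and cinner_self_real: "Im (cinner x x) = 0"
    and cinner_self_nonneg: "0 \<le> Re (cinner x x)"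
    and cinner_self_zero: "cinner x x = 0 \<longleftrightarrow> x = 0"
    and norm_cinner: "norm x = sqrt (Re (cinner x x))"

type_synonym 'h op = "'h \<Rightarrow> 'h"

definition bop :: "('h::chilbert) op \<Rightarrow> bool" where
  "bop A \<longleftrightarrow> (\<forall>x y. A (x + y) = A x + A y) \<and> (\<forall>c x. A (cscale c x) = cscale c (A x))
     \<and> (\<exists>K. \<forall>x. norm (A x) \<le> K * norm x)"

definition adj :: "('h::chilbert) op \<Rightarrow> 'h op" where
  "adj A = (\<lambda>y. THE z. \<forall>x. cinner z x = cinner y (A x))"

definition op_add :: "('h::chilbert) op \<Rightarrow> 'h op \<Rightarrow> 'h op" where
  "op_add A B = (\<lambda>x. A x + B x)"

definition op_smul :: "complex \<Rightarrow> ('h::chilbert) op \<Rightarrow> 'h op" where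
  "op_smul c A = (\<lambda>x. cscale c (A x))"

definition pos_op :: "('h::chilbert) op \<Rightarrow> bool" where
  "pos_op A \<longleftrightarrow> bop A \<and> (\<forall>x. Im (cinner x (A x)) = 0 \<and> 0 \<le> Re (cinner x (A x)))"

definition op_le :: "('h::chilbert) op \<Rightarrow> 'h op \<Rightarrow> bool" where
  "op_le A B \<longleftrightarrow> pos_op (\<lambda>x. B x - A x)"

text \<open>Closedness in the strong operator topology: every bounded operator lying in the
SOT-closure (basic neighbourhoods given by finitely many vectors and \<open>\<epsilon> > 0\<close>) belongs to the set.\<close>
definition sot_closed :: "('h::chilbert) op set \<Rightarrow> bool" where
  "sot_closed S \<longleftrightarrow> (\<forall>B. bop B \<and>
      (\<forall>F e. finite F \<and> e > 0 \<longrightarrow> (\<exists>A\<in>S. \<forall>x\<in>F. norm (A x - B x) < e)) \<longrightarrow> B \<in> S)"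

definition von_neumann_algebra :: "('h::chilbert) op set \<Rightarrow> bool" where
  "von_neumann_algebra \<A> \<longleftrightarrow>
     (\<forall>A\<in>\<A>. bop A) \<and> id \<in> \<A> \<and>
     (\<forall>A\<in>\<A>. \<forall>B\<in>\<A>. op_add A B \<in> \<A>) \<and>
     (\<forall>c. \<forall>A\<in>\<A>. op_smul c A \<in> \<A>) \<and>
     (\<forall>A\<in>\<A>. \<forall>B\<in>\<A>. A \<circ> B \<in> \<A>) \<and>
     (\<forall>A\<in>\<A>. adj A \<in> \<A>) \<and>
     sot_closed \<A>"

definition pos_part :: "('h::chilbert) op set \<Rightarrow> 'h op set" where
  "pos_part \<A> = {A \<in> \<A>. pos_op A}"

text \<open>Positivity of an \<open>n \<times> n\<close> matrix of operators, viewed as an operator on \<open>H\<^sup>n\<close>.\<close>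
definition mat_pos :: "nat \<Rightarrow> (nat \<Rightarrow> nat \<Rightarrow> ('h::chilbert) op) \<Rightarrow> bool" where
  "mat_pos n M \<longleftrightarrow> (\<forall>x :: nat \<Rightarrow> 'h.
     Im (\<Sum>i<n. \<Sum>j<n. cinner (x i) (M i j (x j))) = 0 \<and>
     0 \<le> Re (\<Sum>i<n. \<Sum>j<n. cinner (x i) (M i j (x j))))"

definition completely_positive :: "('h::chilbert) op set \<Rightarrow> ('h op \<Rightarrow> 'h op) \<Rightarrow> bool" where
  "completely_positive \<A> T \<longleftrightarrow> (\<forall>n M. (\<forall>i<n. \<forall>j<n. M i j \<in> \<A>) \<and> mat_pos n M
       \<longrightarrow> mat_pos n (\<lambda>i j. T (M i j)))"

definition is_lub_in :: "('h::chilbert) op set \<Rightarrow> 'h op set \<Rightarrow> 'h op \<Rightarrow> bool" where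
  "is_lub_in \<A> D s \<longleftrightarrow> s \<in> \<A> \<and> (\<forall>d\<in>D. op_le d s) \<and>
     (\<forall>u\<in>\<A>. (\<forall>d\<in>D. op_le d u) \<longrightarrow> op_le s u)"

text \<open>Normality: preservation of suprema of bounded increasing nets in \<open>\<A>\<^sub>+\<close>
(a net is represented by its range, an upward directed set).\<close>
definition normal_map :: "('h::chilbert) op set \<Rightarrow> ('h op \<Rightarrow> 'h op) \<Rightarrow> bool" where
  "normal_map \<A> T \<longleftrightarrow> (\<forall>D s. D \<subseteq> pos_part \<A> \<and> D \<noteq> {} \<and>
       (\<forall>a\<in>D. \<forall>b\<in>D. \<exists>c\<in>D. op_le a c \<and> op_le b c) \<and>
       (\<exists>K::real. \<forall>d\<in>D. op_le d (op_smul (complex_of_real K) id)) \<and>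
       is_lub_in \<A> D s \<longrightarrow> is_lub_in \<A> (T ` D) (T s))"

definition markov_operator :: "('h::chilbert) op set \<Rightarrow> ('h op \<Rightarrow> 'h op) \<Rightarrow> bool" where
  "markov_operator \<A> T \<longleftrightarrow>
     (\<forall>A\<in>\<A>. T A \<in> \<A>) \<and>
     (\<forall>A\<in>\<A>. \<forall>B\<in>\<A>. T (op_add A B) = op_add (T A) (T B)) \<and>
     (\<forall>c. \<forall>A\<in>\<A>. T (op_smul c A) = op_smul c (T A)) \<and>
     T id = id \<and>
     completely_positive \<A> T \<and> normal_map \<A> T"

definition sot_series_to :: "(('h::chilbert) op \<Rightarrow> 'h op) \<Rightarrow> 'h op \<Rightarrow> 'h op \<Rightarrow> bool" where
  "sot_series_to T x y \<longleftrightarrow> (\<forall>v. (\<lambda>N. \<Sum>n<N. (T ^^ n) x v) \<longlonglongrightarrow> y v)"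

definition T_summable :: "('h::chilbert) op set \<Rightarrow> ('h op \<Rightarrow> 'h op) \<Rightarrow> 'h op \<Rightarrow> bool" where
  "T_summable \<A> T x \<longleftrightarrow> x \<in> pos_part \<A> \<and> (\<exists>y \<in> pos_part \<A>. sot_series_to T x y)"

definition potential :: "('h::chilbert) op set \<Rightarrow> ('h op \<Rightarrow> 'h op) \<Rightarrow> 'h op \<Rightarrow> bool" where
  "potential \<A> T y \<longleftrightarrow> y \<in> pos_part \<A> \<and> (\<exists>x. T_summable \<A> T x \<and> sot_series_to T x y)"

end

theory Submission
  imports Defs
begin

text \<open>If \<open>y = \<Sum>\<^sub>n T\<^sup>n x\<close>, normality of \<open>T\<close> applied to the increasing partial sums gives
\<open>T y = y - x \<le> y\<close>, and then \<open>T\<^sup>n y = y - \<Sum>\<^sub>k\<^sub><\<^sub>n T\<^sup>k x \<rightarrow> 0\<close>. Conversely, if \<open>T y \<le> y\<close> and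
\<open>T\<^sup>n y \<rightarrow> 0\<close>, the series of \<open>x = y - T y\<close> telescopes to \<open>y\<close>.
If \<open>T a \<le> a\<close>, the iterates \<open>T\<^sup>n a\<close> form a decreasing sequence of positive operators, which
converges strongly (Vigier) to some \<open>h \<ge> 0\<close>; normality applied to the increasing sequence
\<open>a - T\<^sup>n a\<close> yields \<open>T h = h\<close>, and \<open>a - h\<close> is a potential by part (a). The harmonic part of any
decomposition \<open>a = y + h\<close> is recovered as the strong limit of \<open>T\<^sup>n a\<close>, whence uniqueness.\<close>

section \<open>Complex Hilbert spaces\<close>

lemma cscale_zero_right [simp]: "cscale c (0::'a::chilbert) = 0"
  using cscale_add_right[of c 0 0] by simp

lemma cscale_minus_one [simp]: "cscale (-1) (x::'a::chilbert) = - x"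
  using cscale_of_real[of "-1" x] by simp

lemma cscale_zero_left [simp]: "cscale 0 = (\<lambda>x::'a::chilbert. 0)"
  using cscale_of_real[of 0] by fastforce

lemma cinner_zero_right [simp]: "cinner (x::'a::chilbert) 0 = 0"
  using cinner_add_right[of x 0 0] by simp

lemma cinner_add_left: "cinner (x + y) z = cinner x z + cinner y (z::'a::chilbert)"
  using cinner_commute[of "x + y" z] cinner_add_right[of z x y] cinner_commute[of x z]
    cinner_commute[of y z]
  by simp

lemma cinner_cscale_left: "cinner (cscale c x) y = cnj c * cinner x (y::'a::chilbert)"
  using cinner_commute[of "cscale c x" y] cinner_cscale_right[of y c x] cinner_commute[of x y]
  by simp

lemma cinner_minus_right: "cinner x (- y) = - cinner x (y::'a::chilbert)"
  using cinner_add_right[of x y "-y"] by (simp add: add_eq_0_iff2)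

lemma cinner_diff_right: "cinner x (y - z) = cinner x y - cinner x (z::'a::chilbert)"
  using cinner_add_right[of x y "-z"] cinner_minus_right[of x z] by simp

lemma cinner_self_eq_norm_square: "cinner x x = complex_of_real ((norm (x::'a::chilbert))\<^sup>2)"
proof -
  have "(norm x)\<^sup>2 = Re (cinner x x)" using norm_cinner[of x] cinner_self_nonneg[of x] by simp
  then show ?thesis using cinner_self_real[of x] by (simp add: complex_eq_iff)
qed

lemma cnj_mult_self: "cnj z * z = complex_of_real ((cmod z)\<^sup>2)"
  using complex_norm_square[of z] by (simp add: mult.commute)

locale pos_sesquilinear_form =
  fixes q :: "'a::chilbert \<Rightarrow> 'a \<Rightarrow> complex"
  assumes add_right: "q u (v + w) = q u v + q u w"
    and add_left: "q (u + v) w = q u w + q v w"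
    and scale_right: "q u (cscale c v) = c * q u v"
    and scale_left: "q (cscale c u) v = cnj c * q u v"
    and pos: "Im (q w w) = 0 \<and> 0 \<le> Re (q w w)"
begin

lemma hermitian: "q v u = cnj (q u v)"
proof -
  have real: "Im (q w w) = 0" for w using pos by simp
  have "q (u + v) (u + v) = q u u + q u v + q v u + q v v" by (simp add: add_left add_right)
  then have "Im (q u v + q v u) = 0" using real[of "u + v"] real[of u] real[of v] by simp
  moreover
  have "q (u + cscale \<i> v) (u + cscale \<i> v) = q u u + \<i> * q u v - \<i> * q v u + q v v"
    by (simp add: add_left add_right scale_left scale_right algebra_simps)
  then have "Re (q u v - q v u) = 0"
    using real[of "u + cscale \<i> v"] real[of u] real[of v] by simp
  ultimately show ?thesis by (simp add: complex_eq_iff)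
qed

text \<open>Expansion of \<open>q (u - s v) (u - s v) \<ge> 0\<close> for \<open>s = t \<cdot> q v u\<close>.\<close>

lemma quadratic_nonneg:
  "0 \<le> Re (q u u) - 2 * t * (cmod (q u v))\<^sup>2 + t\<^sup>2 * (cmod (q u v))\<^sup>2 * Re (q v v)"
proof -
  define s where "s = complex_of_real t * q v u"
  define a where "a = (cmod (q u v))\<^sup>2"
  have minus_right: "q x (- y) = - q x y" and minus_left: "q (- x) y = - q x y" for x y
    using scale_right[of x "-1" y] scale_left[of "-1" x y] by simp_all
  have dl: "q (x - cscale s y) w = q x w - cnj s * q y w" for x y w
    by (simp only: diff_conv_add_uminus add_left minus_left scale_left; simp)
  have dr: "q w (x - cscale s y) = q w x - s * q w y" for x y w
    by (simp only: diff_conv_add_uminus add_right minus_right scale_right; simp)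
  have cmod_vu: "cmod (q v u) = cmod (q u v)" using hermitian[of v u] by simp
  have "q (u - cscale s v) (u - cscale s v) = q u u - s * q u v - cnj s * q v u + (cnj s * s) * q v v"
    unfolding dl dr by (simp add: algebra_simps)
  also have "s * q u v = complex_of_real (t * a)"
    unfolding s_def hermitian[of v u] a_def using cnj_mult_self[of "q u v"] by (simp add: mult.assoc)
  also have "cnj s * q v u = complex_of_real (t * a)"
    unfolding s_def a_def using cnj_mult_self[of "q v u"] cmod_vu by (simp add: mult.assoc)
  also have "cnj s * s = complex_of_real (t\<^sup>2 * a)"
    unfolding s_def a_def using cnj_mult_self[of "q v u"] cmod_vu
    by (simp add: power2_eq_square algebra_simps)
  finally have "Re (q (u - cscale s v) (u - cscale s v)) = Re (q u u) - 2 * t * a + t\<^sup>2 * a * Re (q v v)"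
    using pos[of v] by simp
  then show ?thesis using pos[of "u - cscale s v"] unfolding a_def by simp
qed

text \<open>Take \<open>t = 1 / Re (q v v)\<close> in the quadratic inequality, or let \<open>t \<rightarrow> \<infinity>\<close> when \<open>Re (q v v) = 0\<close>.\<close>

lemma Cauchy_Schwarz: "(cmod (q u v))\<^sup>2 \<le> Re (q u u) * Re (q v v)"
proof -
  define A B a where "A = Re (q u u)" and "B = Re (q v v)" and "a = (cmod (q u v))\<^sup>2"
  have quadratic: "0 \<le> A - 2 * t * a + t\<^sup>2 * a * B" for t
    unfolding A_def B_def a_def by (rule quadratic_nonneg)
  have "A \<ge> 0" "B \<ge> 0" using pos unfolding A_def B_def by auto
  show ?thesis
  proof (cases "B = 0")
    case True
    show ?thesis
    proof (rule ccontr)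
      assume "\<not> ?thesis"
      then have "a > 0" using True unfolding a_def A_def B_def by simp
      then show False using quadratic[of "(A + 1) / a"] True \<open>A \<ge> 0\<close> by simp
    qed
  next
    case False
    with \<open>B \<ge> 0\<close> have "B > 0" by simp
    have "0 \<le> A - 2 * (1 / B) * a + (1 / B)\<^sup>2 * a * B" using quadratic[of "1 / B"] .
    also have "\<dots> = A - a / B" using \<open>B > 0\<close> by (simp add: power2_eq_square field_simps)
    finally have "a \<le> A * B" using \<open>B > 0\<close> by (simp add: field_simps)
    then show ?thesis unfolding a_def A_def B_def .
  qed
qed

end

lemma pos_sesquilinear_form_cinner: "pos_sesquilinear_form (cinner :: 'a::chilbert \<Rightarrow> 'a \<Rightarrow> complex)"
  by unfold_locales
    (simp_all add: cinner_add_right cinner_add_left cinner_cscale_right cinner_cscale_left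
      cinner_self_real cinner_self_nonneg)

lemma cinner_Cauchy_Schwarz: "cmod (cinner x y) \<le> norm x * norm (y::'a::chilbert)"
proof -
  have "(cmod (cinner x y))\<^sup>2 \<le> Re (cinner x x) * Re (cinner y y)"
    by (rule pos_sesquilinear_form.Cauchy_Schwarz[OF pos_sesquilinear_form_cinner])
  also have "\<dots> = (norm x * norm y)\<^sup>2"
    by (simp add: cinner_self_eq_norm_square power_mult_distrib)
  finally show ?thesis using power2_le_imp_le by (metis mult_nonneg_nonneg norm_ge_zero)
qed

lemma norm_cscale: "norm (cscale c (x::'a::chilbert)) = cmod c * norm x"
proof -
  have "complex_of_real ((norm (cscale c x))\<^sup>2) = (cnj c * c) * complex_of_real ((norm x)\<^sup>2)"
    using cinner_self_eq_norm_square[of "cscale c x", symmetric] cinner_self_eq_norm_square[of x]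
    by (simp add: cinner_cscale_left cinner_cscale_right mult.assoc)
  then have "(norm (cscale c x))\<^sup>2 = (cmod c * norm x)\<^sup>2"
    unfolding cnj_mult_self by (metis of_real_eq_iff of_real_mult power_mult_distrib)
  then show ?thesis by (simp add: power2_eq_iff_nonneg)
qed

lemma bounded_linear_cinner: "bounded_linear (cinner (v::'a::chilbert))"
proof
  show "cinner v (x + y) = cinner v x + cinner v y" for x y by (rule cinner_add_right)
  show "cinner v (r *\<^sub>R x) = r *\<^sub>R cinner v x" for r x
    using cinner_cscale_right[of v "complex_of_real r" x]
    by (simp add: cscale_of_real scaleR_conv_of_real)
  show "\<exists>K. \<forall>x. norm (cinner v x) \<le> norm x * K"
    using cinner_Cauchy_Schwarz[of v] by (metis mult.commute)
qed

lemma bounded_linear_cscale: "bounded_linear (cscale c :: 'a::chilbert \<Rightarrow> 'a)"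
proof
  show "cscale c (x + y) = cscale c x + cscale c y" for x y by (rule cscale_add_right)
  show "cscale c (r *\<^sub>R x) = r *\<^sub>R cscale c x" for r x
    by (simp add: cscale_of_real[symmetric] cscale_cscale mult.commute)
  show "\<exists>K. \<forall>x. norm (cscale c x) \<le> norm x * K"
    using norm_cscale[of c] by (metis mult.commute order_refl)
qed

section \<open>Bounded and positive operators\<close>

lemma bopD:
  assumes "bop A"
  shows "A (x + y) = A x + A y" "A (cscale c x) = cscale c (A x)"
  using assms unfolding bop_def by auto

lemma bop_bound_nonneg: "bop A \<Longrightarrow> \<exists>K\<ge>0. \<forall>x. norm (A x) \<le> K * norm x"
proof -
  assume "bop A"
  then obtain K where K: "\<forall>x. norm (A x) \<le> K * norm x" unfolding bop_def by auto
  have "norm (A x) \<le> max K 0 * norm x" for x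
    using K[rule_format, of x] mult_right_mono[of K "max K 0" "norm x"] by simp
  then show ?thesis by (intro exI[of _ "max K 0"]) auto
qed

lemma bop_add: "bop A \<Longrightarrow> bop B \<Longrightarrow> bop (\<lambda>x. A x + B x)"
proof -
  assume a: "bop A" "bop B"
  obtain K1 where K1: "\<forall>x. norm (A x) \<le> K1 * norm x" using bop_bound_nonneg[OF a(1)] by auto
  obtain K2 where K2: "\<forall>x. norm (B x) \<le> K2 * norm x" using bop_bound_nonneg[OF a(2)] by auto
  have "norm (A x + B x) \<le> (K1 + K2) * norm x" for x
    using norm_triangle_ineq[of "A x" "B x"] K1[rule_format, of x] K2[rule_format, of x]
    by (simp add: distrib_right)
  then show ?thesis
    using a unfolding bop_def by (auto simp: algebra_simps cscale_add_right intro!: exI[of _ "K1 + K2"])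
qed

lemma bop_scale: "bop A \<Longrightarrow> bop (\<lambda>x. cscale c (A x))"
proof -
  assume a: "bop A"
  obtain K where K: "\<forall>x. norm (A x) \<le> K * norm x" using bop_bound_nonneg[OF a] by auto
  have "norm (cscale c (A x)) \<le> (cmod c * K) * norm x" for x
    using K[rule_format, of x] by (simp add: norm_cscale mult.assoc mult_left_mono)
  then show ?thesis
    using a unfolding bop_def
    by (auto simp: cscale_add_right cscale_cscale mult.commute intro!: exI[of _ "cmod c * K"])
qed

lemma bop_diff: "bop A \<Longrightarrow> bop B \<Longrightarrow> bop (\<lambda>x. A x - B x)"
  using bop_add[of A "\<lambda>x. cscale (-1) (B x)"] bop_scale[of B "-1"] by simp

lemma bop_id: "bop id"
  unfolding bop_def by (auto intro: exI[of _ 1])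

lemma bop_cinner_bound: "bop A \<Longrightarrow> \<exists>K\<ge>0. \<forall>x. Re (cinner x (A x)) \<le> K * (norm x)\<^sup>2"
proof -
  assume "bop A"
  then obtain K where K: "K \<ge> 0" "\<forall>x. norm (A x) \<le> K * norm x" using bop_bound_nonneg by blast
  have "Re (cinner x (A x)) \<le> K * (norm x)\<^sup>2" for x
  proof -
    have "Re (cinner x (A x)) \<le> norm x * norm (A x)"
      using complex_Re_le_cmod cinner_Cauchy_Schwarz order_trans by blast
    also have "\<dots> \<le> norm x * (K * norm x)" using K(2) by (simp add: mult_left_mono)
    finally show ?thesis by (simp add: power2_eq_square algebra_simps)
  qed
  then show ?thesis using K(1) by blast
qed

lemma pos_opD:
  assumes "pos_op Q"
  shows "bop Q" "Im (cinner x (Q x)) = 0" "0 \<le> Re (cinner x (Q x))"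
  using assms unfolding pos_op_def by auto

lemma pos_op_Cauchy_Schwarz:
  assumes "pos_op Q"
  shows "(cmod (cinner u (Q v)))\<^sup>2 \<le> Re (cinner u (Q u)) * Re (cinner v (Q v))"
proof -
  interpret pos_sesquilinear_form "\<lambda>u v. cinner u (Q v)"
    by unfold_locales
      (use pos_opD[OF assms] in \<open>simp_all add: bopD cinner_add_right cinner_add_left
        cinner_cscale_right cinner_cscale_left\<close>)
  show ?thesis by (rule Cauchy_Schwarz)
qed

lemma pos_op_eq_zero:
  assumes "pos_op Q" "\<And>v. Re (cinner v (Q v)) = 0"
  shows "Q v = 0"
proof -
  have "(cmod (cinner (Q v) (Q v)))\<^sup>2 \<le> 0"
    using pos_op_Cauchy_Schwarz[OF assms(1), of "Q v" v] assms(2)[of v] by simp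
  then show ?thesis using cinner_self_zero by auto
qed

lemma pos_op_zero: "pos_op (\<lambda>x. 0)"
  unfolding pos_op_def bop_def by (auto intro: exI[of _ 0])

lemma pos_op_add: "pos_op A \<Longrightarrow> pos_op B \<Longrightarrow> pos_op (\<lambda>x. A x + B x)"
  unfolding pos_op_def by (auto simp: bop_add cinner_add_right)

lemma op_le_refl: "op_le A A"
  unfolding op_le_def using pos_op_zero by simp

lemma op_le_trans:
  assumes "op_le A B" "op_le B C"
  shows "op_le A C"
proof -
  have "pos_op (\<lambda>x. (C x - B x) + (B x - A x))"
    using assms unfolding op_le_def by (rule pos_op_add[rotated])
  then show ?thesis unfolding op_le_def by simp
qed

lemma op_le_antisym:
  assumes "op_le A B" "op_le B A"
  shows "A = B"
proof
  fix v
  have pos: "pos_op (\<lambda>x. B x - A x)" "pos_op (\<lambda>x. A x - B x)"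
    using assms unfolding op_le_def by auto
  have "Re (cinner w (B w - A w)) = 0" for w
    using pos_opD(3)[OF pos(1), of w] pos_opD(3)[OF pos(2), of w]
    by (simp add: cinner_diff_right)
  then have "B v - A v = 0" using pos_op_eq_zero[OF pos(1)] by simp
  then show "A v = B v" by simp
qed

lemma pos_op_iff_op_le_zero: "pos_op A \<longleftrightarrow> op_le (\<lambda>x. 0) A"
  unfolding op_le_def by simp

lemma op_le_incseq:
  assumes "\<And>n. op_le (f n) (f (Suc n))" "m \<le> n"
  shows "op_le (f m) (f n)"
  using assms(2)
proof (induction rule: dec_induct)
  case (step k)
  show ?case using op_le_trans[OF step.IH assms(1)[of k]] .
qed (rule op_le_refl)

lemma op_le_decseq:
  assumes "\<And>n. op_le (f (Suc n)) (f n)" "m \<le> n"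
  shows "op_le (f n) (f m)"
  using assms(2)
proof (induction rule: dec_induct)
  case (step k)
  show ?case using op_le_trans[OF assms(1)[of k] step.IH] .
qed (rule op_le_refl)

lemma op_le_scalar_id:
  assumes "pos_op g"
  shows "\<exists>K. op_le g (op_smul (complex_of_real K) id)"
proof -
  obtain K where K: "\<forall>x. Re (cinner x (g x)) \<le> K * (norm x)\<^sup>2"
    using bop_cinner_bound[OF pos_opD(1)[OF assms]] by blast
  have inner: "cinner x (op_smul (complex_of_real K) id x - g x) =
      complex_of_real (K * (norm x)\<^sup>2) - cinner x (g x)" for x
    unfolding op_smul_def
    by (simp add: cinner_diff_right cinner_cscale_right cinner_self_eq_norm_square)
  have "bop (\<lambda>x. op_smul (complex_of_real K) id x - g x)"
    unfolding op_smul_def by (intro bop_diff bop_scale[OF bop_id] pos_opD(1)[OF assms])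
  then have "pos_op (\<lambda>x. op_smul (complex_of_real K) id x - g x)"
    unfolding pos_op_def inner using pos_opD(2)[OF assms] K by simp
  then show ?thesis unfolding op_le_def by blast
qed

lemma is_lub_in_unique: "is_lub_in A D s \<Longrightarrow> is_lub_in A D s' \<Longrightarrow> s = s'"
  unfolding is_lub_in_def by (blast intro: op_le_antisym)

section \<open>Strong limits of monotone sequences\<close>

lemma pos_op_strong_limit:
  assumes "bop Q" "\<And>x. (\<lambda>n. F n x) \<longlonglongrightarrow> Q x"
    and "\<And>x. eventually (\<lambda>n. Im (cinner x (F n x)) = 0 \<and> 0 \<le> Re (cinner x (F n x))) sequentially"
  shows "pos_op Q"
  unfolding pos_op_def
proof (intro conjI allI assms(1))
  fix x
  have lim: "(\<lambda>n. cinner x (F n x)) \<longlonglongrightarrow> cinner x (Q x)"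
    using bounded_linear.tendsto[OF bounded_linear_cinner assms(2)] .
  have "eventually (\<lambda>n. Im (cinner x (F n x)) \<le> 0) sequentially"
    "eventually (\<lambda>n. 0 \<le> Im (cinner x (F n x))) sequentially"
    "eventually (\<lambda>n. 0 \<le> Re (cinner x (F n x))) sequentially"
    using assms(3)[of x] by (auto elim: eventually_mono)
  then have "Im (cinner x (Q x)) \<le> 0" "0 \<le> Im (cinner x (Q x))" "0 \<le> Re (cinner x (Q x))"
    using tendsto_upperbound[OF tendsto_Im[OF lim]] tendsto_lowerbound[OF tendsto_Im[OF lim]]
      tendsto_lowerbound[OF tendsto_Re[OF lim]]
    by simp_all
  then show "Im (cinner x (Q x)) = 0" "0 \<le> Re (cinner x (Q x))" by simp_all
qed

lemma op_le_strong_limit_left: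
  assumes "bop B" "bop g" "\<And>x. (\<lambda>n. f n x) \<longlonglongrightarrow> g x"
    and "eventually (\<lambda>n. op_le B (f n)) sequentially"
  shows "op_le B g"
  unfolding op_le_def
proof (rule pos_op_strong_limit[where F = "\<lambda>n x. f n x - B x"])
  show "bop (\<lambda>x. g x - B x)" using assms(2,1) by (rule bop_diff)
  show "(\<lambda>n. f n x - B x) \<longlonglongrightarrow> g x - B x" for x using assms(3) by (intro tendsto_intros)
  show "eventually (\<lambda>n. Im (cinner x (f n x - B x)) = 0 \<and> 0 \<le> Re (cinner x (f n x - B x)))
      sequentially" for x
    using assms(4) by (rule eventually_mono) (simp add: op_le_def pos_op_def)
qed

lemma op_le_strong_limit_right:
  assumes "bop B" "bop g" "\<And>x. (\<lambda>n. f n x) \<longlonglongrightarrow> g x"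
    and "eventually (\<lambda>n. op_le (f n) B) sequentially"
  shows "op_le g B"
  unfolding op_le_def
proof (rule pos_op_strong_limit[where F = "\<lambda>n x. B x - f n x"])
  show "bop (\<lambda>x. B x - g x)" using assms(1,2) by (rule bop_diff)
  show "(\<lambda>n. B x - f n x) \<longlonglongrightarrow> B x - g x" for x using assms(3) by (intro tendsto_intros)
  show "eventually (\<lambda>n. Im (cinner x (B x - f n x)) = 0 \<and> 0 \<le> Re (cinner x (B x - f n x)))
      sequentially" for x
    using assms(4) by (rule eventually_mono) (simp add: op_le_def pos_op_def)
qed

text \<open>From \<open>|\<langle>B v, B v\<rangle>|\<^sup>2 \<le> \<langle>B v, B (B v)\<rangle> \<langle>v, B v\<rangle>\<close> (Cauchy--Schwarz for the form of \<open>B\<close>).\<close>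

lemma pos_op_norm_square_le:
  assumes "pos_op B" "\<And>w. Re (cinner w (B w)) \<le> K * (norm w)\<^sup>2"
  shows "(norm (B v))\<^sup>2 \<le> K * Re (cinner v (B v))"
proof -
  define n where "n = norm (B v)"
  define R where "R = Re (cinner v (B v))"
  have "R \<ge> 0" unfolding R_def using assms(1) by (rule pos_opD)
  have KR: "0 \<le> K * R"
  proof (cases "K \<ge> 0")
    case True then show ?thesis using \<open>R \<ge> 0\<close> by simp
  next
    case False
    then have "K * (norm v)\<^sup>2 \<le> 0" by (intro mult_nonpos_nonneg) auto
    then have "R = 0" using assms(2)[of v] \<open>R \<ge> 0\<close> unfolding R_def by linarith
    then show ?thesis by simp
  qed
  have "(cmod (cinner (B v) (B v)))\<^sup>2 \<le> Re (cinner (B v) (B (B v))) * R"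
    using pos_op_Cauchy_Schwarz[OF assms(1), of "B v" v] unfolding R_def .
  also have "\<dots> \<le> K * n\<^sup>2 * R"
    unfolding n_def using assms(2)[of "B v"] \<open>R \<ge> 0\<close> by (simp add: mult_right_mono)
  finally have "n\<^sup>2 * n\<^sup>2 \<le> n\<^sup>2 * (K * R)"
    unfolding n_def by (simp add: cinner_self_eq_norm_square power2_eq_square norm_mult ac_simps)
  then show ?thesis
  proof (cases "n = 0")
    case True then show ?thesis using KR unfolding n_def R_def by simp
  next
    case False
    then have "n\<^sup>2 > 0" by simp
    with \<open>n\<^sup>2 * n\<^sup>2 \<le> n\<^sup>2 * (K * R)\<close> have "n\<^sup>2 \<le> K * R"
      by (simp only: mult_le_cancel_left_pos)
    then show ?thesis unfolding n_def R_def .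
  qed
qed

lemma pos_op_norm_le:
  assumes "pos_op B" "K \<ge> 0" "\<And>w. Re (cinner w (B w)) \<le> K * (norm w)\<^sup>2"
  shows "norm (B x) \<le> K * norm x"
proof -
  have "(norm (B x))\<^sup>2 \<le> K * Re (cinner x (B x))" by (rule pos_op_norm_square_le[OF assms(1,3)])
  also have "\<dots> \<le> K * (K * (norm x)\<^sup>2)" by (rule mult_left_mono[OF assms(3) assms(2)])
  also have "\<dots> = (K * norm x)\<^sup>2" by (simp add: power2_eq_square)
  finally show ?thesis by (rule power2_le_imp_le) (use assms(2) in simp)
qed

lemma strong_limit_bop:
  assumes "\<And>n. bop (f n)" "\<And>n x. norm (f n x) \<le> K * norm x" "\<And>x. (\<lambda>n. f n x) \<longlonglongrightarrow> h x"
  shows "bop h"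
  unfolding bop_def
proof (intro conjI allI)
  fix x y
  have "(\<lambda>n. f n (x + y)) \<longlonglongrightarrow> h x + h y"
    using tendsto_add[OF assms(3)[of x] assms(3)[of y]] by (simp add: bopD[OF assms(1)])
  then show "h (x + y) = h x + h y" by (rule LIMSEQ_unique[OF assms(3)])
next
  fix c x
  have "(\<lambda>n. f n (cscale c x)) \<longlonglongrightarrow> cscale c (h x)"
    using bounded_linear.tendsto[OF bounded_linear_cscale assms(3)[of x]]
    by (simp add: bopD[OF assms(1)])
  then show "h (cscale c x) = cscale c (h x)" by (rule LIMSEQ_unique[OF assms(3)])
next
  have "norm (h x) \<le> K * norm x" for x
    by (rule tendsto_upperbound[OF tendsto_norm[OF assms(3)] always_eventually])
      (simp_all add: assms(2))
  then show "\<exists>K. \<forall>x. norm (h x) \<le> K * norm x" by blast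
qed

lemma Cauchy_if_norm_square_le_increments:
  fixes x :: "nat \<Rightarrow> 'a::real_normed_vector" and r :: "nat \<Rightarrow> real"
  assumes "Cauchy r" "K \<ge> 0" "\<And>m n. m \<le> n \<Longrightarrow> (norm (x m - x n))\<^sup>2 \<le> K * (r m - r n)"
  shows "Cauchy x"
proof (rule CauchyI)
  fix e :: real assume "e > 0"
  then have "e\<^sup>2 / (K + 1) > 0" using assms(2) by simp
  from CauchyD[OF assms(1) this] obtain M
    where M: "\<forall>m\<ge>M. \<forall>n\<ge>M. norm (r m - r n) < e\<^sup>2 / (K + 1)" by blast
  have close: "norm (x m - x n) < e" if "m \<ge> M" "n \<ge> M" "m \<le> n" for m n
  proof -
    have "r m - r n < e\<^sup>2 / (K + 1)" using M that(1,2) by fastforce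
    then have "K * (r m - r n) \<le> K * (e\<^sup>2 / (K + 1))" by (rule mult_left_mono[OF less_imp_le assms(2)])
    with assms(3)[OF that(3)] have "(norm (x m - x n))\<^sup>2 \<le> K * (e\<^sup>2 / (K + 1))" by linarith
    also have "\<dots> < e\<^sup>2" using assms(2) \<open>e > 0\<close> by (simp add: field_simps)
    finally show ?thesis by (rule power2_less_imp_less) (use \<open>e > 0\<close> in simp)
  qed
  have "norm (x m - x n) < e" if "m \<ge> M" "n \<ge> M" for m n
    using close[OF that] close[OF that(2,1)] norm_minus_commute[of "x m"] by (cases "m \<le> n") simp_all
  then show "\<exists>M. \<forall>m\<ge>M. \<forall>n\<ge>M. norm (x m - x n) < e" by blast
qed

text \<open>Since \<open>\<langle>v, a\<^sub>n v\<rangle>\<close> decreases to a limit and \<open>\<parallel>(a\<^sub>m - a\<^sub>n) v\<parallel>\<^sup>2 \<le> K \<langle>v, (a\<^sub>m - a\<^sub>n) v\<rangle>\<close>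
for \<open>m \<le> n\<close> (with \<open>K\<close> a bound for \<open>a\<^sub>0\<close>), the sequence \<open>a\<^sub>n v\<close> is Cauchy.\<close>

lemma decseq_pos_op_convergent:
  assumes pos: "\<And>n. pos_op (a n)" and dec: "\<And>n. op_le (a (Suc n)) (a n)"
  shows "convergent (\<lambda>n. a n v)"
proof -
  obtain K where K: "K \<ge> 0" "\<forall>w. Re (cinner w (a 0 w)) \<le> K * (norm w)\<^sup>2"
    using bop_cinner_bound[OF pos_opD(1)[OF pos]] by blast
  have diff_pos: "pos_op (\<lambda>x. a m x - a n x)" if "m \<le> n" for m n
    using op_le_decseq[of a, OF dec that] unfolding op_le_def .
  define r where "r n = Re (cinner v (a n v))" for n
  have r_mono: "r n \<le> r m" if "m \<le> n" for m n
    using pos_opD(3)[OF diff_pos[OF that], of v] unfolding r_def by (simp add: cinner_diff_right)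
  have diff_bound: "(norm (a m v - a n v))\<^sup>2 \<le> K * (r m - r n)" if "m \<le> n" for m n
  proof -
    have "Re (cinner w (a m w - a n w)) \<le> K * (norm w)\<^sup>2" for w
    proof -
      have "Re (cinner w (a m w - a n w)) \<le> Re (cinner w (a 0 w))"
        using pos_opD(3)[OF diff_pos[of 0 m], of w] pos_opD(3)[OF pos[of n], of w]
        by (simp add: cinner_diff_right)
      then show ?thesis using K(2) by (meson order_trans)
    qed
    from pos_op_norm_square_le[OF diff_pos[OF that] this, of v]
    show ?thesis unfolding r_def by (simp add: cinner_diff_right)
  qed
  have "decseq r" using r_mono by (simp add: decseq_def)
  moreover have "r n \<ge> 0" for n unfolding r_def using pos by (rule pos_opD)
  ultimately obtain L where "r \<longlonglongrightarrow> L" using decseq_convergent[of r 0] by blast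
  then have "Cauchy r" by (rule LIMSEQ_imp_Cauchy)
  then have "Cauchy (\<lambda>n. a n v)" using K(1) diff_bound by (rule Cauchy_if_norm_square_le_increments)
  then show ?thesis by (simp add: Cauchy_convergent_iff)
qed

lemma decseq_pos_op_strong_limit:
  assumes pos: "\<And>n. pos_op (a n)" and dec: "\<And>n. op_le (a (Suc n)) (a n)"
  obtains h where "bop h" "pos_op h" "\<And>v. (\<lambda>n. a n v) \<longlonglongrightarrow> h v" "\<And>n. op_le h (a n)"
proof -
  define h where "h v = lim (\<lambda>n. a n v)" for v
  have lim: "(\<lambda>n. a n v) \<longlonglongrightarrow> h v" for v
    unfolding h_def using decseq_pos_op_convergent[of a, OF pos dec] convergent_LIMSEQ_iff by blast
  have bop: "bop (a n)" for n using pos by (rule pos_opD)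
  obtain K where K: "K \<ge> 0" "\<forall>w. Re (cinner w (a 0 w)) \<le> K * (norm w)\<^sup>2"
    using bop_cinner_bound[OF bop] by blast
  have "Re (cinner w (a n w)) \<le> K * (norm w)\<^sup>2" for n w
  proof -
    have "op_le (a n) (a 0)" by (rule op_le_decseq[of a, OF dec]) simp
    then have "0 \<le> Re (cinner w (a 0 w - a n w))" unfolding op_le_def by (rule pos_opD)
    then show ?thesis using K(2)[rule_format, of w] by (simp add: cinner_diff_right)
  qed
  then have "norm (a n x) \<le> K * norm x" for n x by (rule pos_op_norm_le[OF pos K(1)])
  then have "bop h" using strong_limit_bop[OF bop _ lim] by blast
  moreover have "pos_op h"
    unfolding pos_op_iff_op_le_zero
    by (rule op_le_strong_limit_left[OF pos_opD(1)[OF pos_op_zero] \<open>bop h\<close> lim])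
      (simp add: pos[unfolded pos_op_iff_op_le_zero])
  moreover have "op_le h (a n)" for n
    by (rule op_le_strong_limit_right[OF bop \<open>bop h\<close> lim])
      (auto simp: eventually_sequentially intro: op_le_decseq[of a, OF dec])
  ultimately show ?thesis using that lim by blast
qed

section \<open>Markov operators on a von Neumann algebra\<close>

locale vn_markov =
  fixes A :: "('h::chilbert) op set" and T :: "'h op \<Rightarrow> 'h op"
  assumes vn: "von_neumann_algebra A" and markov: "markov_operator A T"
begin

lemma bop_in: "X \<in> A \<Longrightarrow> bop X"
  using vn unfolding von_neumann_algebra_def by blast

lemma id_in: "id \<in> A"
  using vn unfolding von_neumann_algebra_def by blast

lemma add_in: "X \<in> A \<Longrightarrow> Y \<in> A \<Longrightarrow> (\<lambda>x. X x + Y x) \<in> A"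
  using vn unfolding von_neumann_algebra_def op_add_def by blast

lemma scale_in: "X \<in> A \<Longrightarrow> (\<lambda>x. cscale c (X x)) \<in> A"
  using vn unfolding von_neumann_algebra_def op_smul_def by blast

lemma diff_in: "X \<in> A \<Longrightarrow> Y \<in> A \<Longrightarrow> (\<lambda>x. X x - Y x) \<in> A"
  using add_in[of X "\<lambda>x. cscale (-1) (Y x)"] scale_in[of Y "-1"] by simp

lemma zero_in: "(\<lambda>x. 0) \<in> A"
  using scale_in[OF id_in, of 0] by simp

lemma strong_limit_in:
  assumes "bop H" "\<And>x. (\<lambda>n. f n x) \<longlonglongrightarrow> H x" "\<And>n. f n \<in> A"
  shows "H \<in> A"
proof -
  have "\<exists>X\<in>A. \<forall>x\<in>F. norm (X x - H x) < e" if "finite F" "e > 0" for F e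
  proof -
    have "\<forall>x\<in>F. eventually (\<lambda>n. norm (f n x - H x) < e) sequentially"
      using assms(2) that(2) by (simp add: tendsto_iff dist_norm)
    then have "eventually (\<lambda>n. \<forall>x\<in>F. norm (f n x - H x) < e) sequentially"
      by (rule eventually_ball_finite[OF that(1)])
    then obtain N where "\<forall>x\<in>F. norm (f N x - H x) < e" by (auto simp: eventually_sequentially)
    then show ?thesis using assms(3)[of N] by blast
  qed
  moreover have "sot_closed A" using vn unfolding von_neumann_algebra_def by blast
  ultimately show ?thesis using assms(1) unfolding sot_closed_def by blast
qed

lemma incseq_is_lub_in:
  assumes "\<And>n. f n \<in> A" "\<And>n. op_le (f n) (f (Suc n))" "g \<in> A"
    and lim: "\<And>v. (\<lambda>n. f n v) \<longlonglongrightarrow> g v"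
  shows "is_lub_in A (range f) g"
proof -
  have "op_le (f n) g" for n
    by (rule op_le_strong_limit_left[OF bop_in[OF assms(1)] bop_in[OF assms(3)] lim])
      (auto simp: eventually_sequentially intro!: exI[of _ n] op_le_incseq[of f, OF assms(2)])
  moreover have "op_le g u" if "u \<in> A" "\<forall>n. op_le (f n) u" for u
    using op_le_strong_limit_right[OF bop_in[OF that(1)] bop_in[OF assms(3)] lim] that(2) by simp
  ultimately show ?thesis unfolding is_lub_in_def using \<open>g \<in> A\<close> by blast
qed

lemma T_in: "X \<in> A \<Longrightarrow> T X \<in> A"
  using markov unfolding markov_operator_def by blast

lemma T_add: "X \<in> A \<Longrightarrow> Y \<in> A \<Longrightarrow> T (\<lambda>x. X x + Y x) = (\<lambda>x. T X x + T Y x)"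
  using markov unfolding markov_operator_def op_add_def by blast

lemma T_scale: "X \<in> A \<Longrightarrow> T (\<lambda>x. cscale c (X x)) = (\<lambda>x. cscale c (T X x))"
  using markov unfolding markov_operator_def op_smul_def by blast

lemma T_diff: "X \<in> A \<Longrightarrow> Y \<in> A \<Longrightarrow> T (\<lambda>x. X x - Y x) = (\<lambda>x. T X x - T Y x)"
  using T_add[of X "\<lambda>x. cscale (-1) (Y x)"] T_scale[of Y "-1"] scale_in[of Y "-1"] by simp

lemma T_zero: "T (\<lambda>x. 0) = (\<lambda>x. 0)"
  using T_scale[OF id_in, of 0] by simp

text \<open>Positivity is the case \<open>n = 1\<close> of complete positivity.\<close>

lemma T_pos_op:
  assumes "X \<in> A" "pos_op X"
  shows "pos_op (T X)"
proof -
  have "mat_pos 1 (\<lambda>i j. X)" unfolding mat_pos_def using pos_opD(2,3)[OF assms(2)] by simp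
  then have "mat_pos 1 (\<lambda>i j. T X)"
    using markov assms(1) unfolding markov_operator_def completely_positive_def by auto
  then have "Im (cinner x (T X x)) = 0 \<and> 0 \<le> Re (cinner x (T X x))" for x
    unfolding mat_pos_def by (elim allE[of _ "\<lambda>_. x"]) simp
  then show ?thesis unfolding pos_op_def using bop_in[OF T_in[OF assms(1)]] by simp
qed

lemma T_mono: "X \<in> A \<Longrightarrow> Y \<in> A \<Longrightarrow> op_le X Y \<Longrightarrow> op_le (T X) (T Y)"
  unfolding op_le_def using T_pos_op[of "\<lambda>x. Y x - X x"] T_diff[of Y X] diff_in[of Y X] by simp

lemma Tn_in: "X \<in> A \<Longrightarrow> (T ^^ n) X \<in> A"
  by (induction n) (auto simp: T_in)

lemma Tn_add:
  "X \<in> A \<Longrightarrow> Y \<in> A \<Longrightarrow> (T ^^ n) (\<lambda>x. X x + Y x) = (\<lambda>x. (T ^^ n) X x + (T ^^ n) Y x)"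
  by (induction n) (auto simp: T_add Tn_in)

lemma Tn_diff:
  "X \<in> A \<Longrightarrow> Y \<in> A \<Longrightarrow> (T ^^ n) (\<lambda>x. X x - Y x) = (\<lambda>x. (T ^^ n) X x - (T ^^ n) Y x)"
  by (induction n) (auto simp: T_diff Tn_in)

lemma Tn_pos_op: "X \<in> A \<Longrightarrow> pos_op X \<Longrightarrow> pos_op ((T ^^ n) X)"
  by (induction n) (auto simp: T_pos_op Tn_in)

lemma Tn_mono: "X \<in> A \<Longrightarrow> Y \<in> A \<Longrightarrow> op_le X Y \<Longrightarrow> op_le ((T ^^ n) X) ((T ^^ n) Y)"
  by (induction n) (auto simp: T_mono Tn_in)

lemma Tn_fixed: "T X = X \<Longrightarrow> (T ^^ n) X = X"
  by (induction n) auto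

text \<open>Normality is applied to the range of \<open>f\<close>, whose least upper bound in \<open>\<A>\<close> is the strong limit.\<close>

lemma T_incseq_strong_limit:
  assumes fA: "\<And>n. f n \<in> A" and pos: "\<And>n. pos_op (f n)" and inc: "\<And>n. op_le (f n) (f (Suc n))"
    and "g \<in> A" "\<And>v. (\<lambda>n. f n v) \<longlonglongrightarrow> g v"
    and "g' \<in> A" "\<And>v. (\<lambda>n. T (f n) v) \<longlonglongrightarrow> g' v"
  shows "T g = g'"
proof -
  have lub: "is_lub_in A (range f) g" by (rule incseq_is_lub_in[OF fA inc assms(4,5)])
  have below: "op_le (f n) g" for n using lub unfolding is_lub_in_def by blast
  have "pos_op g"
    using op_le_trans[OF pos[of 0, unfolded pos_op_iff_op_le_zero] below[of 0]]
    unfolding pos_op_iff_op_le_zero .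
  then obtain K where K: "op_le g (op_smul (complex_of_real K) id)"
    using op_le_scalar_id by blast
  have "normal_map A T" using markov unfolding markov_operator_def by blast
  then have "is_lub_in A (T ` range f) (T g)"
    unfolding normal_map_def
  proof (elim allE[of _ "range f"] allE[of _ g] mp, intro conjI)
    show "range f \<subseteq> pos_part A" using fA pos unfolding pos_part_def by blast
    show "\<forall>a\<in>range f. \<forall>b\<in>range f. \<exists>c\<in>range f. op_le a c \<and> op_le b c"
    proof (intro ballI)
      fix a b assume "a \<in> range f" "b \<in> range f"
      then obtain i j where "a = f i" "b = f j" by blast
      then show "\<exists>c\<in>range f. op_le a c \<and> op_le b c"
        using op_le_incseq[of f, OF inc, of i "max i j"] op_le_incseq[of f, OF inc, of j "max i j"]
        by auto
    qed
    show "\<exists>K. \<forall>d\<in>range f. op_le d (op_smul (complex_of_real K) id)"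
      using op_le_trans[OF below K] by blast
  qed (use lub in simp_all)
  moreover have "is_lub_in A (range (\<lambda>n. T (f n))) g'"
    by (rule incseq_is_lub_in[OF T_in[OF fA] T_mono[OF fA fA inc] assms(6,7)])
  ultimately show ?thesis
    using is_lub_in_unique[of A "range (\<lambda>n. T (f n))" "T g" g'] by (simp add: image_image)
qed

section \<open>Potentials\<close>

lemma T_partial_sum:
  assumes "x \<in> A"
  shows "T (\<lambda>v. \<Sum>n<N. (T ^^ n) x v) = (\<lambda>v. \<Sum>n<N. (T ^^ Suc n) x v)"
proof (induction N)
  case 0 then show ?case by (simp add: T_zero)
next
  case (Suc N)
  have "(\<lambda>v. \<Sum>n<N. (T ^^ n) x v) \<in> A"
    by (induction N) (simp_all add: zero_in add_in Tn_in assms)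
  then show ?case using Suc by (simp add: T_add Tn_in assms)
qed

lemma T_potential:
  assumes "T_summable A T x" "sot_series_to T x y" "y \<in> A"
  shows "T y = (\<lambda>v. y v - x v)"
proof -
  have xA: "x \<in> A" and "pos_op x" using assms(1) unfolding T_summable_def pos_part_def by auto
  define S where "S N = (\<lambda>v. \<Sum>n<N. (T ^^ n) x v)" for N
  have S_Suc: "S (Suc N) = (\<lambda>v. S N v + (T ^^ N) x v)" for N unfolding S_def by simp
  have SA: "S N \<in> A" for N
    by (induction N) (simp_all add: S_def[of 0] S_Suc zero_in add_in Tn_in xA)
  have S_pos: "pos_op (S N)" for N
    by (induction N) (simp_all add: S_def[of 0] S_Suc pos_op_zero pos_op_add Tn_pos_op xA \<open>pos_op x\<close>)
  have S_inc: "op_le (S N) (S (Suc N))" for N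
    unfolding op_le_def S_Suc using Tn_pos_op[OF xA \<open>pos_op x\<close>] by simp
  have S_lim: "(\<lambda>N. S N v) \<longlonglongrightarrow> y v" for v
    using assms(2) unfolding sot_series_to_def S_def by blast
  have "T (S N) v = S (Suc N) v - x v" for N v
    unfolding S_def T_partial_sum[OF xA] by (simp only: sum.lessThan_Suc_shift) simp
  then have "(\<lambda>N. T (S N) v) \<longlonglongrightarrow> y v - x v" for v
    by (simp only:) (intro tendsto_intros LIMSEQ_Suc S_lim)
  then show ?thesis
    by (rule T_incseq_strong_limit[of S, OF SA S_pos S_inc assms(3) S_lim diff_in[OF assms(3) xA]])
qed

lemma funpow_T_telescope:
  assumes "x \<in> A" "y \<in> A" "T y = (\<lambda>v. y v - x v)"
  shows "(T ^^ n) y = (\<lambda>v. y v - (\<Sum>k<n. (T ^^ k) x v))"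
proof (induction n)
  case 0 then show ?case by simp
next
  case (Suc n)
  have "(T ^^ Suc n) y = (T ^^ n) (\<lambda>v. y v - x v)"
    by (simp only: funpow_Suc_right comp_def assms(3))
  also have "\<dots> = (\<lambda>v. y v - (\<Sum>k<Suc n. (T ^^ k) x v))"
    unfolding Tn_diff[OF assms(2,1)] Suc by (simp add: algebra_simps)
  finally show ?case .
qed

lemma potential_superharmonic_tendsto_zero:
  assumes "potential A T y"
  shows "op_le (T y) y" "(\<lambda>n. (T ^^ n) y v) \<longlonglongrightarrow> 0"
proof -
  obtain x where x: "T_summable A T x" "sot_series_to T x y"
    using assms unfolding potential_def by blast
  have xA: "x \<in> A" and "pos_op x" using x(1) unfolding T_summable_def pos_part_def by auto
  have yA: "y \<in> A" using assms unfolding potential_def pos_part_def by auto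
  have Ty: "T y = (\<lambda>v. y v - x v)" by (rule T_potential[OF x yA])
  then show "op_le (T y) y" unfolding op_le_def using \<open>pos_op x\<close> by simp
  have "(\<lambda>n. y v - (\<Sum>k<n. (T ^^ k) x v)) \<longlonglongrightarrow> y v - y v"
    using x(2) unfolding sot_series_to_def by (intro tendsto_intros) blast
  then show "(\<lambda>n. (T ^^ n) y v) \<longlonglongrightarrow> 0" by (simp add: funpow_T_telescope[OF xA yA Ty])
qed

lemma potential_if_superharmonic_tendsto_zero:
  assumes yP: "y \<in> pos_part A" and le: "op_le (T y) y" and lim: "\<forall>v. (\<lambda>n. (T ^^ n) y v) \<longlonglongrightarrow> 0"
  shows "potential A T y"
proof -
  have yA: "y \<in> A" using yP unfolding pos_part_def by auto
  define x where "x = (\<lambda>v. y v - T y v)"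
  have xA: "x \<in> A" unfolding x_def by (rule diff_in[OF yA T_in[OF yA]])
  have "pos_op x" using le unfolding op_le_def x_def .
  have "(\<lambda>N. \<Sum>n<N. (T ^^ n) x v) \<longlonglongrightarrow> y v" for v
  proof -
    have "(\<Sum>n<N. (T ^^ n) x v) = y v - (T ^^ N) y v" for N
      unfolding x_def Tn_diff[OF yA T_in[OF yA]] funpow_swap1[of T, symmetric]
      using sum_lessThan_telescope'[of "\<lambda>n. (T ^^ n) y v"] by simp
    moreover have "(\<lambda>N. y v - (T ^^ N) y v) \<longlonglongrightarrow> y v - 0" using lim by (intro tendsto_intros) auto
    ultimately show ?thesis by simp
  qed
  then have "sot_series_to T x y" unfolding sot_series_to_def by blast
  then show ?thesis
    unfolding potential_def T_summable_def using xA \<open>pos_op x\<close> yP by (auto simp: pos_part_def)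
qed

section \<open>Riesz decomposition\<close>

lemma harmonic_limit_of_iterates:
  assumes aA: "a \<in> A" and "pos_op a" and le: "op_le (T a) a"
  obtains h where "h \<in> A" "pos_op h" "T h = h"
    "\<And>v. (\<lambda>n. (T ^^ n) a v) \<longlonglongrightarrow> h v" "op_le h a"
proof -
  have Tn_Suc: "(T ^^ Suc n) a = (T ^^ n) (T a)" for n by (simp only: funpow_Suc_right comp_def)
  have dec: "op_le ((T ^^ Suc n) a) ((T ^^ n) a)" for n
    unfolding Tn_Suc by (rule Tn_mono[OF T_in[OF aA] aA le])
  obtain h where "bop h" "pos_op h" and lim: "\<And>v. (\<lambda>n. (T ^^ n) a v) \<longlonglongrightarrow> h v"
    and h_le: "\<And>n. op_le h ((T ^^ n) a)"
    using decseq_pos_op_strong_limit[of "\<lambda>n. (T ^^ n) a", OF Tn_pos_op[OF aA \<open>pos_op a\<close>] dec] by blast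
  have hA: "h \<in> A" using strong_limit_in[OF \<open>bop h\<close> lim Tn_in[OF aA]] .
  define f where "f n = (\<lambda>v. a v - (T ^^ n) a v)" for n
  have fA: "f n \<in> A" for n unfolding f_def by (rule diff_in[OF aA Tn_in[OF aA]])
  have f_pos: "pos_op (f n)" for n
    using op_le_decseq[of "\<lambda>n. (T ^^ n) a", OF dec, of 0 n] unfolding f_def op_le_def by simp
  have f_inc: "op_le (f n) (f (Suc n))" for n
    using dec[of n] unfolding f_def op_le_def by (simp del: funpow.simps)
  have "(\<lambda>n. f n v) \<longlonglongrightarrow> a v - h v" for v
    unfolding f_def using lim by (intro tendsto_intros)
  moreover have "(\<lambda>n. T (f n) v) \<longlonglongrightarrow> T a v - h v" for v
  proof -
    have "(\<lambda>n. T a v - (T ^^ Suc n) a v) \<longlonglongrightarrow> T a v - h v"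
      by (intro tendsto_intros LIMSEQ_Suc[OF lim])
    then show ?thesis unfolding f_def T_diff[OF aA Tn_in[OF aA]] by simp
  qed
  ultimately have "T (\<lambda>v. a v - h v) = (\<lambda>v. T a v - h v)"
    by (rule T_incseq_strong_limit[of f, OF fA f_pos f_inc diff_in[OF aA hA] _ diff_in[OF T_in[OF aA] hA]])
  then have eq: "(\<lambda>v. T a v - T h v) = (\<lambda>v. T a v - h v)" unfolding T_diff[OF aA hA] .
  have "T h = h"
  proof
    fix v
    from fun_cong[OF eq, of v] show "T h v = h v" by simp
  qed
  then show ?thesis using that hA \<open>pos_op h\<close> lim h_le[of 0] by simp
qed

lemma superharmonic_Riesz_decomposition:
  assumes aP: "a \<in> pos_part A" and le: "op_le (T a) a"
  shows "\<exists>y h. potential A T y \<and> h \<in> A \<and> pos_op h \<and> T h = h \<and> a = op_add y h"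
proof -
  have aA: "a \<in> A" and "pos_op a" using aP unfolding pos_part_def by auto
  obtain h where hA: "h \<in> A" and "pos_op h" "T h = h"
    and lim: "\<And>v. (\<lambda>n. (T ^^ n) a v) \<longlonglongrightarrow> h v" and "op_le h a"
    using harmonic_limit_of_iterates[OF aA \<open>pos_op a\<close> le] by blast
  define y where "y = (\<lambda>v. a v - h v)"
  have "y \<in> pos_part A"
    using diff_in[OF aA hA] \<open>op_le h a\<close> unfolding y_def pos_part_def op_le_def by simp
  moreover have "op_le (T y) y"
    using le unfolding y_def T_diff[OF aA hA] \<open>T h = h\<close> op_le_def by simp
  moreover have "(\<lambda>n. (T ^^ n) y v) \<longlonglongrightarrow> 0" for v
    using tendsto_diff[OF lim[of v] tendsto_const[of "h v"]]
    unfolding y_def Tn_diff[OF aA hA] Tn_fixed[OF \<open>T h = h\<close>] by simp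
  ultimately have "potential A T y" by (blast intro: potential_if_superharmonic_tendsto_zero)
  moreover have "a = op_add y h" unfolding op_add_def y_def by simp
  ultimately show ?thesis using hA \<open>pos_op h\<close> \<open>T h = h\<close> by blast
qed

lemma Riesz_decomposition_superharmonic:
  assumes "potential A T y" "h \<in> A" "T h = h"
  shows "op_le (T (op_add y h)) (op_add y h)"
proof -
  have yA: "y \<in> A" using assms(1) unfolding potential_def pos_part_def by auto
  show ?thesis
    using potential_superharmonic_tendsto_zero(1)[OF assms(1)]
    unfolding op_le_def op_add_def T_add[OF yA assms(2)] assms(3) by simp
qed

lemma iterates_Riesz_decomposition_tendsto:
  assumes "potential A T y" "h \<in> A" "T h = h"
  shows "(\<lambda>n. (T ^^ n) (op_add y h) v) \<longlonglongrightarrow> h v"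
proof -
  have yA: "y \<in> A" using assms(1) unfolding potential_def pos_part_def by auto
  show ?thesis
    using tendsto_add[OF potential_superharmonic_tendsto_zero(2)[OF assms(1)] tendsto_const[of "h v"]]
    unfolding op_add_def Tn_add[OF yA assms(2)] Tn_fixed[OF assms(3)] by simp
qed

lemma Riesz_decomposition_unique:
  assumes "potential A T y1" "h1 \<in> A" "T h1 = h1"
    and "potential A T y2" "h2 \<in> A" "T h2 = h2"
    and "op_add y1 h1 = op_add y2 h2"
  shows "y1 = y2 \<and> h1 = h2"
proof -
  have "h1 = h2"
  proof
    fix v
    show "h1 v = h2 v"
      by (rule LIMSEQ_unique[OF iterates_Riesz_decomposition_tendsto[OF assms(1-3)]
            iterates_Riesz_decomposition_tendsto[OF assms(4-6), folded assms(7)]])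
  qed
  moreover have "y1 = y2"
  proof
    fix v
    have "y1 v + h1 v = y2 v + h2 v" using fun_cong[OF assms(7), of v] unfolding op_add_def .
    with \<open>h1 = h2\<close> show "y1 v = y2 v" by simp
  qed
  ultimately show ?thesis by simp
qed

end

theorem theorem3p3:
  fixes \<A> :: "('h::chilbert) op set" and T :: "'h op \<Rightarrow> 'h op"
  assumes "von_neumann_algebra \<A>" and "markov_operator \<A> T"
  shows "(\<forall>y \<in> pos_part \<A>. potential \<A> T y \<longleftrightarrow>
             op_le (T y) y \<and> (\<forall>v. (\<lambda>n. (T ^^ n) y v) \<longlonglongrightarrow> 0))
       \<and> (\<forall>a \<in> pos_part \<A>.
            (op_le (T a) a \<longleftrightarrow>
               (\<exists>y h. potential \<A> T y \<and> h \<in> \<A> \<and> pos_op h \<and> T h = h \<and> a = op_add y h))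
          \<and> (\<forall>y1 h1 y2 h2.
               potential \<A> T y1 \<and> h1 \<in> \<A> \<and> pos_op h1 \<and> T h1 = h1 \<and> a = op_add y1 h1 \<and>
               potential \<A> T y2 \<and> h2 \<in> \<A> \<and> pos_op h2 \<and> T h2 = h2 \<and> a = op_add y2 h2
               \<longrightarrow> y1 = y2 \<and> h1 = h2))"
proof -
  interpret vn_markov \<A> T using assms by unfold_locales
  have potential_iff: "potential \<A> T y \<longleftrightarrow> op_le (T y) y \<and> (\<forall>v. (\<lambda>n. (T ^^ n) y v) \<longlonglongrightarrow> 0)"
    if "y \<in> pos_part \<A>" for y
    using that potential_superharmonic_tendsto_zero potential_if_superharmonic_tendsto_zero by blast
  have superharmonic_iff: "op_le (T a) a \<longleftrightarrow>
      (\<exists>y h. potential \<A> T y \<and> h \<in> \<A> \<and> pos_op h \<and> T h = h \<and> a = op_add y h)"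
    if "a \<in> pos_part \<A>" for a
    using superharmonic_Riesz_decomposition[OF that] Riesz_decomposition_superharmonic by blast
  have unique: "y1 = y2 \<and> h1 = h2"
    if "potential \<A> T y1" "h1 \<in> \<A>" "T h1 = h1" "a = op_add y1 h1"
      "potential \<A> T y2" "h2 \<in> \<A>" "T h2 = h2" "a = op_add y2 h2" for a y1 h1 y2 h2
    using Riesz_decomposition_unique that by simp
  show ?thesis using potential_iff superharmonic_iff unique by blast
qed

end
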